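(* Let $G$ be a finite graph and $k$ a nonnegative integer. If the edge-arboricity of $G$ satisfies $a(G)\le k$, then $G$ is adaptably $(k+1)$-choosable, and hence $G$ is $(k+1,1)$-choosable.
   Context: The edge-arboricity $a(G)$ is the minimum number of forests into which the edge set of $G$ can be partitioned. Given a (possibly improper) edge coloring $F$ of $G$ with integers, a vertex coloring $c$ of $G$ is adapted to $F$ if no edge $uv$ satisfies $c(u)=c(v)=F(uv)$. For a list assignment $L$ (a set $L(v)$ of colors for each vertex $v$), an $L$-coloring adapted to $F$ is a coloring adapted to $F$ with $c(v)\in L(v)$ for all $v$. $G$ is adaptably $k$-choosable if for every edge coloring $F$ and every list assignment $L$ with $|L(v)|\ge k$ for all $v$, there is an $L$-coloring of $G$ adapted to $F$. A $(k,d)$-list assignment assigns to each vertex $v$ a list $L(v)$ of at least $k$ colors such that $|L(x)\cap L(y)|\le d$ whenever $x,y$ are adjacent; $G$ is $(k,d)$-choosable if for every $(k,d)$-list assignment $L$ there is a proper vertex coloring $\varphi$ with $\varphi(v)\in L(v)$ for all $v$. *)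

theory Defs
  imports Main
begin

definition finite_graph :: "'a set \<Rightarrow> 'a set set \<Rightarrow> bool" where
  "finite_graph V E \<longleftrightarrow> finite V \<and> (\<forall>e\<in>E. e \<subseteq> V \<and> card e = 2)"

definition is_cycle_in :: "'a set set \<Rightarrow> 'a list \<Rightarrow> bool" where
  "is_cycle_in F vs \<longleftrightarrow> length vs \<ge> 3 \<and> distinct vs \<and>
     (\<forall>i < length vs. {vs ! i, vs ! ((i + 1) mod length vs)} \<in> F)"

definition is_forest :: "'a set set \<Rightarrow> bool" where
  "is_forest F \<longleftrightarrow> \<not> (\<exists>vs. is_cycle_in F vs)"

definition forest_partitionable :: "'a set set \<Rightarrow> nat \<Rightarrow> bool" where
  "forest_partitionable E k \<longleftrightarrow>
     (\<exists>f :: 'a set \<Rightarrow> nat. (\<forall>e\<in>E. f e < k) \<and> (\<forall>i<k. is_forest {e\<in>E. f e = i}))"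

definition arboricity :: "'a set set \<Rightarrow> nat" where
  "arboricity E = (LEAST k. forest_partitionable E k)"

definition at_least :: "nat \<Rightarrow> 'c set \<Rightarrow> bool" where
  "at_least k A \<longleftrightarrow> infinite A \<or> k \<le> card A"

definition adapted :: "'a set set \<Rightarrow> ('a set \<Rightarrow> int) \<Rightarrow> ('a \<Rightarrow> int) \<Rightarrow> bool" where
  "adapted E F c \<longleftrightarrow> (\<forall>u v. {u, v} \<in> E \<longrightarrow> \<not> (c u = c v \<and> c v = F {u, v}))"

definition adaptably_choosable :: "'a set \<Rightarrow> 'a set set \<Rightarrow> nat \<Rightarrow> bool" where
  "adaptably_choosable V E k \<longleftrightarrow>
     (\<forall>(F :: 'a set \<Rightarrow> int) (L :: 'a \<Rightarrow> int set). (\<forall>v\<in>V. at_least k (L v)) \<longrightarrow>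
        (\<exists>c. (\<forall>v\<in>V. c v \<in> L v) \<and> adapted E F c))"

definition kd_list_assignment :: "'a set \<Rightarrow> 'a set set \<Rightarrow> nat \<Rightarrow> nat \<Rightarrow> ('a \<Rightarrow> int set) \<Rightarrow> bool" where
  "kd_list_assignment V E k d L \<longleftrightarrow>
     (\<forall>v\<in>V. at_least k (L v)) \<and>
     (\<forall>x y. {x, y} \<in> E \<longrightarrow> finite (L x \<inter> L y) \<and> card (L x \<inter> L y) \<le> d)"

definition kd_choosable :: "'a set \<Rightarrow> 'a set set \<Rightarrow> nat \<Rightarrow> nat \<Rightarrow> bool" where
  "kd_choosable V E k d \<longleftrightarrow>
     (\<forall>L. kd_list_assignment V E k d L \<longrightarrow>
        (\<exists>\<phi>. (\<forall>v\<in>V. \<phi> v \<in> L v) \<and> (\<forall>u v. {u, v} \<in> E \<longrightarrow> \<phi> u \<noteq> \<phi> v)))"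

end

theory Submission
  imports Defs
begin

text \<open>
  A forest can be oriented so that every vertex is the tail of at most one edge: a finite
  nonempty forest has a leaf, and its edge is oriented away from it before the rest is
  oriented recursively. Orienting each of k forests in this way, every vertex is the tail of
  at most k edges. Given an edge colouring F and lists of k + 1 colours, each vertex v picks a
  colour different from F e for all edges e with tail v; an edge uv with c u = c v = F uv is
  then impossible at its tail. For a (k + 1, 1)-list assignment, colouring each edge by the
  (at most one) colour common to the lists of its ends turns any adapted colouring into a
  proper one.
\<close>

lemma is_forest_subset: "is_forest F \<Longrightarrow> F' \<subseteq> F \<Longrightarrow> is_forest F'"
  unfolding is_forest_def is_cycle_in_def by blast

lemma is_forest_subset_singleton:
  assumes "F \<subseteq> {e}"
  shows "is_forest F"
  unfolding is_forest_def
proof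
  assume "\<exists>vs. is_cycle_in F vs"
  then obtain vs where len: "length vs \<ge> 3" and dist: "distinct vs"
    and edges: "\<forall>i < length vs. {vs ! i, vs ! ((i + 1) mod length vs)} \<in> F"
    unfolding is_cycle_in_def by blast
  have lens: "0 < length vs" "1 < length vs" "2 < length vs"
    and "(0 + 1) mod length vs = 1" "(1 + 1) mod length vs = 2"
    using len by auto
  then have "{vs ! 0, vs ! 1} \<in> F" "{vs ! 1, vs ! 2} \<in> F"
    using edges by metis+
  then have "{vs ! 0, vs ! 1} = {vs ! 1, vs ! 2}"
    using assms by blast
  moreover have "vs ! 0 \<noteq> vs ! 1" "vs ! 0 \<noteq> vs ! 2"
    using nth_eq_iff_index_eq[OF dist, of 0 1] nth_eq_iff_index_eq[OF dist, of 0 2] lens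
    by simp_all
  ultimately show False by blast
qed

lemma forest_partitionable_card:
  assumes "finite E"
  shows "forest_partitionable E (card E)"
proof -
  obtain g where g: "bij_betw g E {0..<card E}"
    using ex_bij_betw_finite_nat[OF assms] by blast
  have "{e \<in> E. g e = i} \<subseteq> {e}" if "e \<in> E" "g e = i" for e i
    using g that unfolding bij_betw_def inj_on_def by auto
  then have "is_forest {e \<in> E. g e = i}" for i
    by (cases "\<exists>e\<in>E. g e = i") (auto intro: is_forest_subset_singleton)
  moreover have "g e < card E" if "e \<in> E" for e
    using g that by (auto dest: bij_betwE)
  ultimately show ?thesis
    unfolding forest_partitionable_def by blast
qed

lemma forest_partitionable_mono:
  assumes "forest_partitionable E j" "j \<le> k"
  shows "forest_partitionable E k"
proof -
  obtain f where f: "\<forall>e\<in>E. f e < j" "\<forall>i<j. is_forest {e\<in>E. f e = i}"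
    using assms(1) unfolding forest_partitionable_def by blast
  have "is_forest {e\<in>E. f e = i}" for i
  proof (cases "i < j")
    case False
    then have "{e\<in>E. f e = i} = {}"
      using f(1) by fastforce
    then show ?thesis
      using is_forest_subset_singleton[OF empty_subsetI] by (simp only:)
  qed (use f(2) in blast)
  then show ?thesis
    using f(1) assms(2) unfolding forest_partitionable_def
    by (metis order_less_le_trans)
qed

lemma forest_partitionable_if_arboricity_le:
  assumes "finite E" "arboricity E \<le> k"
  shows "forest_partitionable E k"
proof -
  have "forest_partitionable E (arboricity E)"
    unfolding arboricity_def
    by (rule LeastI[of "forest_partitionable E", OF forest_partitionable_card[OF assms(1)]])
  then show ?thesis
    using assms(2) by (rule forest_partitionable_mono)
qed

definition is_path :: "'a set set \<Rightarrow> 'a list \<Rightarrow> bool" where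
  "is_path F vs \<longleftrightarrow> distinct vs \<and> length vs \<ge> 2 \<and>
     (\<forall>i. Suc i < length vs \<longrightarrow> {vs ! i, vs ! Suc i} \<in> F)"

lemma is_path_Cons:
  assumes "is_path F vs" "w \<notin> set vs" "{w, vs ! 0} \<in> F"
  shows "is_path F (w # vs)"
  using assms unfolding is_path_def by (auto simp: nth_Cons split: nat.split)

lemma is_cycle_in_take_is_path:
  assumes "is_path F vs" "2 \<le> j" "j < length vs" "{vs ! j, vs ! 0} \<in> F"
  shows "is_cycle_in F (take (Suc j) vs)"
  unfolding is_cycle_in_def
proof (intro conjI allI impI)
  show "3 \<le> length (take (Suc j) vs)" "distinct (take (Suc j) vs)"
    using assms unfolding is_path_def by auto
  fix i assume "i < length (take (Suc j) vs)"
  then have "i < j \<or> i = j" using assms(3) by auto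
  then show "{take (Suc j) vs ! i, take (Suc j) vs ! ((i + 1) mod length (take (Suc j) vs))} \<in> F"
    using assms unfolding is_path_def by auto
qed

lemma set_is_path_subset:
  assumes "is_path F vs"
  shows "set vs \<subseteq> \<Union>F"
proof
  fix x assume "x \<in> set vs"
  then obtain i where i: "i < length vs" "vs ! i = x" by (auto simp: in_set_conv_nth)
  have "Suc i < length vs \<or> (i = Suc (i - 1))"
    using assms i unfolding is_path_def by auto
  then show "x \<in> \<Union>F"
    using assms i unfolding is_path_def by (metis UnionI insertI1 insert_commute lessI less_trans_Suc)
qed

lemma card_2_obtains_other:
  assumes "card e = 2" "a \<in> e"
  obtains b where "b \<noteq> a" "e = {a, b}"
proof -
  obtain x y where xy: "e = {x, y}" "x \<noteq> y"
    using assms(1) by (auto simp: card_2_iff)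
  show thesis
  proof (cases "a = x")
    case True
    then show ?thesis using that[of y] xy by simp
  next
    case False
    then have "a = y" using assms(2) xy by blast
    then show ?thesis using that[of x] xy by (simp add: insert_commute)
  qed
qed

text \<open>A leaf is the first vertex of a longest path: any further edge at it would extend the
  path or close a cycle.\<close>
lemma is_forest_has_leaf:
  assumes "finite F" "\<forall>e\<in>F. card e = 2" "is_forest F" "F \<noteq> {}"
  shows "\<exists>a b. {a, b} \<in> F \<and> (\<forall>e\<in>F. a \<in> e \<longrightarrow> e = {a, b})"
proof -
  have fin: "finite (\<Union>F)"
    using assms(1,2) by (intro finite_Union) (auto intro: card_ge_0_finite)
  obtain e where "e \<in> F"
    using assms(4) by blast
  then obtain a b where "{a, b} \<in> F" "a \<noteq> b"
    using assms(2) by (auto simp: card_2_iff)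
  then have "is_path F [a, b]"
    unfolding is_path_def by (auto simp: less_Suc_eq)
  moreover have "length vs < Suc (card (\<Union>F))" if "is_path F vs" for vs
    using card_mono[OF fin set_is_path_subset[OF that]] that
    by (simp add: is_path_def distinct_card)
  ultimately obtain vs where path: "is_path F vs"
    and longest: "\<And>ws. is_path F ws \<Longrightarrow> length ws \<le> length vs"
    using ex_has_greatest_nat[of "is_path F" _ length] by metis
  have "e = {vs ! 0, vs ! 1}" if e: "e \<in> F" "vs ! 0 \<in> e" for e
  proof -
    have "card e = 2"
      using assms(2) e(1) by blast
    then obtain w where w: "w \<noteq> vs ! 0" "e = {vs ! 0, w}"
      using e(2) by (rule card_2_obtains_other)
    then have edge: "{w, vs ! 0} \<in> F"
      using e(1) by (simp add: insert_commute)
    have "w \<in> set vs"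
    proof (rule ccontr)
      assume "w \<notin> set vs"
      then have "length (w # vs) \<le> length vs"
        using longest[OF is_path_Cons[OF path _ edge]] by blast
      then show False by simp
    qed
    then obtain j where j: "j < length vs" "vs ! j = w"
      by (auto simp: in_set_conv_nth)
    have "\<not> is_cycle_in F (take (Suc j) vs)"
      using assms(3) unfolding is_forest_def by blast
    then have "\<not> 2 \<le> j"
      using is_cycle_in_take_is_path[OF path _ j(1)] edge j(2) by blast
    moreover have "j \<noteq> 0"
      using j(2) w(1) by metis
    ultimately show ?thesis
      using j(2) w(2) by (simp add: numeral_2_eq_2 not_less_eq_eq le_Suc_eq)
  qed
  moreover have "{vs ! 0, vs ! 1} \<in> F"
    using path unfolding is_path_def by auto
  ultimately show ?thesis by blast
qed

lemma is_forest_ex_inj_endpoint: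
  assumes "finite F" "\<forall>e\<in>F. card e = 2" "is_forest F"
  shows "\<exists>t. (\<forall>e\<in>F. t e \<in> e) \<and> inj_on t F"
  using assms
proof (induction "card F" arbitrary: F)
  case 0
  then show ?case by auto
next
  case (Suc n)
  then have "F \<noteq> {}" by auto
  then obtain a b where leaf: "{a, b} \<in> F" "\<forall>e\<in>F. a \<in> e \<longrightarrow> e = {a, b}"
    using is_forest_has_leaf[OF Suc.prems] by blast
  define F' where "F' = F - {{a, b}}"
  have "n = card F'" "finite F'" "\<forall>e\<in>F'. card e = 2" "is_forest F'"
    using Suc.hyps(2) Suc.prems leaf(1) is_forest_subset[OF Suc.prems(3), of F']
    unfolding F'_def by auto
  then obtain t where t: "\<forall>e\<in>F'. t e \<in> e" "inj_on t F'"
    using Suc.hyps(1) by blast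
  have "a \<notin> t ` F'"
    using t(1) leaf(2) unfolding F'_def by fastforce
  moreover have "{a, b} \<notin> F'"
    unfolding F'_def by blast
  ultimately have "inj_on (t({a, b} := a)) (insert {a, b} F')"
    using t(2) by (auto simp: inj_on_fun_updI fun_upd_image)
  moreover have "F = insert {a, b} F'"
    using leaf(1) unfolding F'_def by blast
  ultimately show ?case
    using t(1) by (intro exI[of _ "t({a, b} := a)"]) auto
qed

lemma forest_partitionable_ex_bounded_tail_choice:
  assumes "finite E" "\<forall>e\<in>E. card e = 2" "forest_partitionable E k"
  shows "\<exists>tail. (\<forall>e\<in>E. tail e \<in> e) \<and> (\<forall>v. card {e\<in>E. tail e = v} \<le> k)"
proof -
  obtain f where f: "\<forall>e\<in>E. f e < k" "\<forall>i<k. is_forest {e\<in>E. f e = i}"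
    using assms(3) unfolding forest_partitionable_def by blast
  have "\<forall>i\<in>{..<k}. \<exists>t. (\<forall>e\<in>{e\<in>E. f e = i}. t e \<in> e) \<and> inj_on t {e\<in>E. f e = i}"
  proof
    fix i assume "i \<in> {..<k}"
    then show "\<exists>t. (\<forall>e\<in>{e\<in>E. f e = i}. t e \<in> e) \<and> inj_on t {e\<in>E. f e = i}"
      using f(2) assms(1,2) by (intro is_forest_ex_inj_endpoint) auto
  qed
  then obtain T where T: "\<forall>i\<in>{..<k}. (\<forall>e\<in>{e\<in>E. f e = i}. T i e \<in> e) \<and> inj_on (T i) {e\<in>E. f e = i}"
    by (rule bchoice[THEN exE])
  define tail where "tail e = T (f e) e" for e
  have "tail e \<in> e" if "e \<in> E" for e
  proof -
    have "f e \<in> {..<k}" "e \<in> {e'\<in>E. f e' = f e}"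
      using f(1) that by auto
    then show ?thesis
      using T unfolding tail_def by blast
  qed
  moreover have "card {e\<in>E. tail e = v} \<le> k" for v
  proof -
    have "inj_on f {e\<in>E. tail e = v}"
    proof (rule inj_onI)
      fix x y
      assume x: "x \<in> {e\<in>E. tail e = v}" and y: "y \<in> {e\<in>E. tail e = v}" and "f x = f y"
      have "f x \<in> {..<k}"
        using f(1) x by simp
      then have "inj_on (T (f x)) {e\<in>E. f e = f x}"
        using T by blast
      moreover have "x \<in> {e\<in>E. f e = f x}" "y \<in> {e\<in>E. f e = f x}" "T (f x) x = T (f x) y"
        using x y \<open>f x = f y\<close> unfolding tail_def by auto
      ultimately show "x = y"
        by (meson inj_onD)
    qed
    moreover have "f ` {e\<in>E. tail e = v} \<subseteq> {..<k}"
      using f(1) by auto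
    ultimately have "card {e\<in>E. tail e = v} \<le> card {..<k}"
      by (rule card_inj_on_le) simp
    then show ?thesis by simp
  qed
  ultimately show ?thesis by blast
qed

lemma at_least_Suc_ex_notin:
  assumes "at_least (Suc k) A" "finite B" "card B \<le> k"
  shows "\<exists>x\<in>A. x \<notin> B"
proof (rule ccontr)
  assume "\<not> (\<exists>x\<in>A. x \<notin> B)"
  then have "A \<subseteq> B" by blast
  then have "finite A" "card A \<le> card B"
    using assms(2) by (auto intro: finite_subset card_mono)
  then show False
    using assms unfolding at_least_def by simp
qed

lemma adaptably_choosable_if_bounded_tail_choice:
  assumes "finite E" "\<forall>e\<in>E. e \<subseteq> V"
    and "\<forall>e\<in>E. tail e \<in> e" "\<forall>v. card {e\<in>E. tail e = v} \<le> k"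
  shows "adaptably_choosable V E (k + 1)"
  unfolding adaptably_choosable_def
proof (intro allI impI)
  fix F :: "'a set \<Rightarrow> int" and L :: "'a \<Rightarrow> int set"
  assume L: "\<forall>v\<in>V. at_least (k + 1) (L v)"
  define forbidden where "forbidden v = F ` {e\<in>E. tail e = v}" for v
  have "card (forbidden v) \<le> k" for v
  proof -
    have "finite {e\<in>E. tail e = v}"
      using assms(1) by simp
    then show ?thesis
      unfolding forbidden_def using assms(4) card_image_le le_trans by blast
  qed
  then have "\<exists>z\<in>L v. z \<notin> forbidden v" if "v \<in> V" for v
    using L that assms(1) by (intro at_least_Suc_ex_notin) (auto simp: forbidden_def)
  then obtain c where c: "\<And>v. v \<in> V \<Longrightarrow> c v \<in> L v \<and> c v \<notin> forbidden v"
    by metis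
  have "adapted E F c"
    unfolding adapted_def
  proof (intro allI impI notI)
    fix u v assume e: "{u, v} \<in> E" and bad: "c u = c v \<and> c v = F {u, v}"
    have "tail {u, v} \<in> {u, v}"
      using assms(3) e by blast
    then have "tail {u, v} \<in> V" "c (tail {u, v}) = F {u, v}"
      using assms(2) e bad by auto
    moreover have "F {u, v} \<in> forbidden (tail {u, v})"
      unfolding forbidden_def using e by blast
    ultimately show False
      using c by metis
  qed
  then show "\<exists>c. (\<forall>v\<in>V. c v \<in> L v) \<and> adapted E F c"
    using c by blast
qed

lemma kd_choosable_if_adaptably_choosable:
  assumes "adaptably_choosable V E k" "\<forall>e\<in>E. e \<subseteq> V"
  shows "kd_choosable V E k 1"
  unfolding kd_choosable_def
proof (intro allI impI)
  fix L :: "'a \<Rightarrow> int set"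
  assume L: "kd_list_assignment V E k 1 L"
  define F where "F e = (SOME z. z \<in> (\<Inter>x\<in>e. L x))" for e
  have "\<forall>v\<in>V. at_least k (L v)"
    using L unfolding kd_list_assignment_def by blast
  then obtain c where c: "\<forall>v\<in>V. c v \<in> L v" "adapted E F c"
    using assms(1) unfolding adaptably_choosable_def by blast
  have "c u \<noteq> c v" if e: "{u, v} \<in> E" for u v
  proof
    assume eq: "c u = c v"
    have "u \<in> V" "v \<in> V"
      using assms(2) e by auto
    then have "c v \<in> L u \<inter> L v"
      using c(1) eq by (metis IntI)
    moreover have "finite (L u \<inter> L v)" "card (L u \<inter> L v) \<le> 1"
      using L e unfolding kd_list_assignment_def by auto
    then have "\<forall>a\<in>L u \<inter> L v. \<forall>b\<in>L u \<inter> L v. a = b"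
      using card_le_Suc0_iff_eq by (metis One_nat_def)
    ultimately have "L u \<inter> L v = {c v}"
      by blast
    then have "F {u, v} = c v"
      unfolding F_def by simp
    moreover have "\<not> (c u = c v \<and> c v = F {u, v})"
      using c(2) e unfolding adapted_def by blast
    ultimately show False
      using eq by simp
  qed
  then show "\<exists>\<phi>. (\<forall>v\<in>V. \<phi> v \<in> L v) \<and> (\<forall>u v. {u, v} \<in> E \<longrightarrow> \<phi> u \<noteq> \<phi> v)"
    using c(1) by blast
qed

theorem proposition1:
  fixes V :: "'a set" and E :: "'a set set" and k :: nat
  assumes "finite_graph V E"
    and "arboricity E \<le> k"
  shows "adaptably_choosable V E (k + 1) \<and> kd_choosable V E (k + 1) 1"
proof -
  have edges: "\<forall>e\<in>E. e \<subseteq> V" "\<forall>e\<in>E. card e = 2"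
    using assms(1) unfolding finite_graph_def by auto
  moreover have "finite E"
    using assms(1) edges(1) unfolding finite_graph_def by (meson finite_Pow_iff finite_subset PowI subsetI)
  ultimately obtain tail where "\<forall>e\<in>E. tail e \<in> e" "\<forall>v. card {e\<in>E. tail e = v} \<le> k"
    using forest_partitionable_ex_bounded_tail_choice[OF _ edges(2)]
      forest_partitionable_if_arboricity_le[OF _ assms(2)] by blast
  then have "adaptably_choosable V E (k + 1)"
    using adaptably_choosable_if_bounded_tail_choice \<open>finite E\<close> edges(1) by blast
  then show ?thesis
    using kd_choosable_if_adaptably_choosable edges(1) by blast
qed

end
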